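(* Let $m\ge1$ and $m_0\in\{0,\dots,m\}$. Let $\mathbf p=(p_1,\dots,p_m)$ have joint distribution $P$ such that $p_1,\dots,p_{m_0}$ are mutually independent and each satisfies $P(p_i\le x)\le x$ for all $x\in[0,1]$ (the remaining $p$-values having arbitrary joint distribution, possibly dependent on the first ones). Let $\delta$ be a multiple testing procedure rejecting exactly the hypotheses $i$ with $p_i\le t^*(\mathbf p)$, where $t^*:[0,1]^m\to[0,1]$ is measurable and nonincreasing in each coordinate. Let $\phi:\mathbb N\to\mathbb R$ be nondecreasing, and set $R(P,\delta)=\mathbb E_{\mathbf p\sim P}[\phi(V_m(\delta(\mathbf p)))]$. Then $R(P,\delta)\le R(\mathrm{DU}(m,m_0),\delta)$.
   Context: $V_m(\delta(\mathbf p))=|\{1\le i\le m_0: p_i\le t^*(\mathbf p)\}|$ is the number of rejected true null hypotheses, hypotheses $1,\dots,m_0$ being the true nulls. $\mathrm{DU}(m,m_0)$ is the Dirac-uniform distribution: $p_1,\dots,p_{m_0}$ i.i.d. uniform on $(0,1)$ and $p_i=0$ almost surely for $m_0<i\le m$. (Example: $\phi(v)=\mathbf 1\{v\ge k\}$ gives the $k$-FWER.) *)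

theory Defs
  imports "HOL-Probability.Probability"
begin

text \<open>p-value vectors (p_1,...,p_m) are represented 0-indexed as extensional functions
  on {..<m}; hypotheses with index i < m0 are the true nulls.\<close>

definition pspace :: "nat \<Rightarrow> (nat \<Rightarrow> real) measure" where
  "pspace m = PiM {..<m} (\<lambda>_. borel)"

definition Vrej :: "nat \<Rightarrow> ((nat \<Rightarrow> real) \<Rightarrow> real) \<Rightarrow> (nat \<Rightarrow> real) \<Rightarrow> nat" where
  "Vrej m0 t p = card {i. i < m0 \<and> p i \<le> t p}"

definition DU :: "nat \<Rightarrow> nat \<Rightarrow> (nat \<Rightarrow> real) measure" where
  "DU m m0 = PiM {..<m} (\<lambda>i. if i < m0 then uniform_measure lborel {0<..<1}
                                 else return borel 0)"

definition risk :: "(nat \<Rightarrow> real) measure \<Rightarrow> nat \<Rightarrow> ((nat \<Rightarrow> real) \<Rightarrow> real)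
                     \<Rightarrow> (nat \<Rightarrow> real) \<Rightarrow> real" where
  "risk P m0 t \<phi> = (\<integral>p. \<phi> (Vrej m0 t p) \<partial>P)"

end

theory Submission
  imports Defs
begin

text \<open>
  Since t is nonincreasing, lowering the non-null p-values to 0 can only raise the threshold and
  hence the number of rejected true nulls. So the risk under P is at most the expectation
  of a bounded functional of the null p-values alone, nonincreasing in each of them. By
  independence these have a product law with superuniform factors, and for such functionals
  replacing one factor at a time by the uniform law can only increase the expectation: by Fubini
  this is a one-dimensional statement, which the layer-cake formula reduces to comparing the
  masses of down-closed sets, i.e. to P(p <= a) <= a. The uniform product with the non-nulls
  at 0 is DU(m, m0).
\<close>

abbreviation unif01 :: "real measure" where
  "unif01 \<equiv> uniform_measure lborel {0<..<1}"

lemma prob_space_unif01: "prob_space unif01"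
  by (rule prob_space_uniform_measure) auto

lemma emeasure_unif01_lessThan: "emeasure unif01 {..<a} = ennreal (max 0 (min 1 a))"
proof -
  have "emeasure unif01 {..<a} = emeasure lborel ({..<a} \<inter> {0<..<1})"
    by (subst emeasure_uniform_measure) (auto simp: Int_commute divide_ennreal_def)
  also have "{..<a} \<inter> {0<..<1} = {0<..<min 1 a}"
    by auto
  also have "emeasure lborel {0<..<min 1 a} = ennreal (max 0 (min 1 a))"
    by (cases "0 \<le> a") auto
  finally show ?thesis .
qed

definition superuniform :: "real measure \<Rightarrow> bool" where
  "superuniform \<mu> \<longleftrightarrow> prob_space \<mu> \<and> sets \<mu> = sets borel \<and> (\<forall>x\<in>{0..1}. measure \<mu> {..x} \<le> x)"

lemma superuniform_unif01: "superuniform unif01"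
proof -
  have "measure unif01 {..x} \<le> x" if "x \<in> {0..1}" for x
  proof -
    have "measure unif01 {..x} = measure lborel ({..x} \<inter> {0<..<1})"
      by (simp add: measure_uniform_measure Int_commute)
    also have "\<dots> \<le> measure lborel {0<..x}"
      using that by (intro measure_mono_fmeasurable) (auto simp: fmeasurable_def)
    finally show ?thesis using that by simp
  qed
  then show ?thesis by (simp add: superuniform_def prob_space_unif01)
qed

lemma (in prob_space) superuniform_distr:
  assumes "random_variable borel X" and "\<And>x. x \<in> {0..1} \<Longrightarrow> prob {\<omega> \<in> space M. X \<omega> \<le> x} \<le> x"
  shows "superuniform (distr M borel X)"
proof -
  have "measure (distr M borel X) {..x} = prob {\<omega> \<in> space M. X \<omega> \<le> x}" for x
    using assms(1) by (simp add: measure_distr vimage_def Int_def conj_commute)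
  then show ?thesis
    using assms by (simp add: superuniform_def prob_space_distr)
qed

lemma superuniform_emeasure_atMost_le:
  assumes "superuniform \<mu>"
  shows "emeasure \<mu> {..a} \<le> emeasure unif01 {..<a}"
proof -
  interpret prob_space \<mu> using assms by (simp add: superuniform_def)
  have sets: "sets \<mu> = sets borel" and le: "\<And>x. x \<in> {0..1} \<Longrightarrow> measure \<mu> {..x} \<le> x"
    using assms by (auto simp: superuniform_def)
  have "measure \<mu> {..a} \<le> max 0 (min 1 a)"
  proof (cases "a < 0")
    case True
    have "measure \<mu> {..a} \<le> measure \<mu> {..0}"
      using True sets by (intro finite_measure_mono) auto
    also have "\<dots> \<le> 0" using le[of 0] by simp
    finally show ?thesis by simp
  next
    case False
    then show ?thesis using le[of a] prob_le_1 by (cases "a \<le> 1") auto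
  qed
  then show ?thesis
    unfolding emeasure_eq_measure emeasure_unif01_lessThan by (rule ennreal_leI)
qed

lemma downclosed_real_cases:
  fixes D :: "real set"
  assumes down: "\<And>x y. x \<in> D \<Longrightarrow> y \<le> x \<Longrightarrow> y \<in> D"
  obtains "D = {}" | "D = UNIV" | a where "{..<a} \<subseteq> D" "D \<subseteq> {..a}"
proof (cases "D = {} \<or> \<not> bdd_above D")
  case True
  have "D = UNIV" if unbounded: "\<not> bdd_above D"
  proof -
    have "y \<in> D" for y
    proof -
      obtain x where "x \<in> D" "y \<le> x"
        using unbounded by (meson bdd_above_def nle_le)
      then show "y \<in> D" by (rule down)
    qed
    then show ?thesis by blast
  qed
  then show ?thesis using True that by metis
next
  case False
  have "y \<in> D" if "y < Sup D" for y
  proof -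
    obtain x where "x \<in> D" "y < x"
      using \<open>y < Sup D\<close> False by (auto simp: less_cSup_iff)
    then show ?thesis using down by (meson less_imp_le)
  qed
  moreover have "D \<subseteq> {..Sup D}"
    using False by (auto intro: cSup_upper)
  ultimately show ?thesis using that by blast
qed

lemma superuniform_emeasure_downclosed_le:
  assumes "superuniform \<mu>" "D \<in> sets borel" "\<And>x y. x \<in> D \<Longrightarrow> y \<le> x \<Longrightarrow> y \<in> D"
  shows "emeasure \<mu> D \<le> emeasure unif01 D"
proof -
  interpret prob_space \<mu> using assms(1) by (simp add: superuniform_def)
  have sets: "sets \<mu> = sets borel" using assms(1) by (simp add: superuniform_def)
  interpret U: prob_space unif01 by (rule prob_space_unif01)
  show ?thesis
  proof (rule downclosed_real_cases[OF assms(3)])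
    assume "D = UNIV"
    then have "emeasure unif01 D = 1"
      using U.emeasure_space_1 by simp
    then show ?thesis by (simp add: emeasure_le_1)
  next
    fix a assume a: "{..<a} \<subseteq> D" "D \<subseteq> {..a}"
    have "emeasure \<mu> D \<le> emeasure \<mu> {..a}"
      using a sets by (intro emeasure_mono) auto
    also have "\<dots> \<le> emeasure unif01 {..<a}"
      by (rule superuniform_emeasure_atMost_le[OF assms(1)])
    also have "\<dots> \<le> emeasure unif01 D"
      using a assms(2) by (intro emeasure_mono) auto
    finally show ?thesis .
  qed auto
qed

lemma nn_integral_layer_cake:
  fixes f :: "'a \<Rightarrow> real"
  assumes "sigma_finite_measure M" and f[measurable]: "f \<in> borel_measurable M"
    and nonneg: "\<And>x. x \<in> space M \<Longrightarrow> 0 \<le> f x"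
  shows "(\<integral>\<^sup>+x. f x \<partial>M) = (\<integral>\<^sup>+s\<in>{0..}. emeasure M {x \<in> space M. s < f x} \<partial>lborel)"
proof -
  interpret pair_sigma_finite M lborel
    by (simp add: assms(1) lborel.sigma_finite_measure_axioms pair_sigma_finite.intro)
  have "(\<integral>\<^sup>+x. f x \<partial>M) = (\<integral>\<^sup>+x. (\<integral>\<^sup>+s. indicator {0..<f x} s \<partial>lborel) \<partial>M)"
    using nonneg by (intro nn_integral_cong) simp
  also have "\<dots> = (\<integral>\<^sup>+s. (\<integral>\<^sup>+x. indicator {0..<f x} s \<partial>M) \<partial>lborel)"
  proof (rule Fubini'[symmetric])
    have "(\<lambda>(x, s). indicator {0..<f x} s :: ennreal) = (\<lambda>(x, s). if 0 \<le> s \<and> s < f x then 1 else 0)"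
      by (auto simp: fun_eq_iff indicator_def)
    then show "(\<lambda>(x, s). indicator {0..<f x} s :: ennreal) \<in> borel_measurable (M \<Otimes>\<^sub>M lborel)"
      by simp
  qed
  also have "\<dots> = (\<integral>\<^sup>+s\<in>{0..}. emeasure M {x \<in> space M. s < f x} \<partial>lborel)"
  proof (intro nn_integral_cong)
    fix s :: real
    have "(\<integral>\<^sup>+x. indicator {0..<f x} s \<partial>M) =
        (\<integral>\<^sup>+x. indicator {0..} s * indicator {x \<in> space M. s < f x} x \<partial>M)"
      by (intro nn_integral_cong) (auto simp: indicator_def)
    then show "(\<integral>\<^sup>+x. indicator {0..<f x} s \<partial>M) = emeasure M {x \<in> space M. s < f x} * indicator {0..} s"
      by (simp add: nn_integral_cmult mult.commute)
  qed
  finally show ?thesis .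
qed

lemma superuniform_nn_integral_antimono_le:
  fixes k :: "real \<Rightarrow> real"
  assumes \<mu>: "superuniform \<mu>" and k[measurable]: "k \<in> borel_measurable borel"
    and "antimono k" and nonneg: "\<And>x. 0 \<le> k x"
  shows "(\<integral>\<^sup>+x. k x \<partial>\<mu>) \<le> (\<integral>\<^sup>+x. k x \<partial>unif01)"
proof -
  interpret prob_space \<mu> using \<mu> by (simp add: superuniform_def)
  have sets: "sets \<mu> = sets borel" using \<mu> by (simp add: superuniform_def)
  have space: "space \<mu> = UNIV" using sets_eq_imp_space_eq[OF sets] by simp
  have "(\<integral>\<^sup>+x. k x \<partial>\<mu>) = (\<integral>\<^sup>+s\<in>{0..}. emeasure \<mu> {x. s < k x} \<partial>lborel)"
    using nn_integral_layer_cake[of \<mu> k] nonneg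
    by (simp add: prob_space_imp_sigma_finite prob_space_axioms space measurable_cong_sets[OF sets refl])
  also have "\<dots> \<le> (\<integral>\<^sup>+s\<in>{0..}. emeasure unif01 {x. s < k x} \<partial>lborel)"
  proof (intro nn_integral_mono mult_right_mono superuniform_emeasure_downclosed_le[OF \<mu>])
    fix s x y :: real
    assume "x \<in> {x. s < k x}" "y \<le> x"
    then show "y \<in> {x. s < k x}"
      using antimonoD[OF \<open>antimono k\<close> \<open>y \<le> x\<close>] by simp
  qed auto
  also have "\<dots> = (\<integral>\<^sup>+x. k x \<partial>unif01)"
    using nn_integral_layer_cake[of unif01 k] nonneg
    by (simp add: prob_space_imp_sigma_finite prob_space_unif01)
  finally show ?thesis .
qed

lemma integrable_bounded:
  fixes f :: "'a \<Rightarrow> real"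
  assumes "prob_space M" "sets M = sets N" "f \<in> borel_measurable N" "\<And>x. x \<in> space N \<Longrightarrow> \<bar>f x\<bar> \<le> B"
  shows "integrable M f"
proof -
  interpret prob_space M by fact
  show ?thesis
    using assms(3,4) sets_eq_imp_space_eq[OF assms(2)]
    by (intro integrable_const_bound[where B=B] AE_I2) (auto simp: measurable_cong_sets[OF assms(2) refl])
qed

lemma (in prob_space) abs_integral_le_const:
  fixes f :: "'a \<Rightarrow> real"
  assumes "\<And>x. \<bar>f x\<bar> \<le> B"
  shows "\<bar>\<integral>x. f x \<partial>M\<bar> \<le> B"
proof (cases "integrable M f")
  case True
  then have "(\<integral>x. \<bar>f x\<bar> \<partial>M) \<le> (\<integral>x. B \<partial>M)"
    using assms by (intro integral_mono) auto
  then show ?thesis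
    using integral_abs_bound[of M f] by (simp add: prob_space del: integral_abs_bound)
next
  case False
  then show ?thesis
    using assms[of undefined] by (simp add: not_integrable_integral_eq)
qed

lemma superuniform_integral_antimono_le:
  fixes f :: "real \<Rightarrow> real"
  assumes \<mu>: "superuniform \<mu>" and f[measurable]: "f \<in> borel_measurable borel"
    and "antimono f" and bounded: "\<And>x. \<bar>f x\<bar> \<le> B"
  shows "(\<integral>x. f x \<partial>\<mu>) \<le> (\<integral>x. f x \<partial>unif01)"
proof -
  have \<mu>_prob: "prob_space \<mu>" and \<mu>_sets: "sets \<mu> = sets borel"
    using \<mu> by (auto simp: superuniform_def)
  define k where "k x = f x + B" for x
  have k_measurable: "k \<in> borel_measurable borel"
    unfolding k_def by simp
  have k_nonneg: "0 \<le> k x" for x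
    using bounded[of x] by (simp add: k_def)
  have "antimono k"
    using \<open>antimono f\<close> by (auto simp: k_def monotone_on_def)
  have integrable: "integrable \<nu> f" "integrable \<nu> k"
    and shift: "(\<integral>x. k x \<partial>\<nu>) = (\<integral>x. f x \<partial>\<nu>) + B"
    if "prob_space \<nu>" "sets \<nu> = sets borel" for \<nu>
  proof -
    interpret prob_space \<nu> by fact
    show f_int: "integrable \<nu> f"
      using bounded by (intro integrable_bounded[OF that f])
    then show "integrable \<nu> k"
      unfolding k_def by (intro Bochner_Integration.integrable_add) auto
    show "(\<integral>x. k x \<partial>\<nu>) = (\<integral>x. f x \<partial>\<nu>) + B"
      using f_int by (simp add: k_def prob_space)
  qed
  have "ennreal (\<integral>x. k x \<partial>\<mu>) \<le> ennreal (\<integral>x. k x \<partial>unif01)"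
    using superuniform_nn_integral_antimono_le[OF \<mu> k_measurable \<open>antimono k\<close> k_nonneg]
      integrable(2)[OF \<mu>_prob \<mu>_sets] integrable(2)[OF prob_space_unif01] k_nonneg
    by (simp add: nn_integral_eq_integral)
  then have "(\<integral>x. k x \<partial>\<mu>) \<le> (\<integral>x. k x \<partial>unif01)"
    using k_nonneg by (simp add: ennreal_le_iff integral_nonneg)
  then show ?thesis
    using shift[OF \<mu>_prob \<mu>_sets] shift[OF prob_space_unif01] by simp
qed

lemma integral_PiM_insert_bounded:
  fixes g :: "('i \<Rightarrow> real) \<Rightarrow> real"
  assumes "finite I" "i \<notin> I" and prob: "\<And>j. prob_space (\<nu> j)" and sets: "\<And>j. sets (\<nu> j) = sets borel"
    and g: "g \<in> borel_measurable (PiM (insert i I) (\<lambda>_. borel))" and bounded: "\<And>x. \<bar>g x\<bar> \<le> B"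
  shows "(\<integral>x. g x \<partial>PiM (insert i I) \<nu>) = (\<integral>x. (\<integral>y. g (x(i := y)) \<partial>\<nu> i) \<partial>PiM I \<nu>)"
proof -
  interpret product_prob_space \<nu> "insert i I"
    by (simp add: prob product_prob_space.intro product_prob_space_axioms.intro
        product_sigma_finite.intro prob_space_imp_sigma_finite)
  have "sets (PiM (insert i I) \<nu>) = sets (PiM (insert i I) (\<lambda>_. borel))"
    by (rule sets_PiM_cong) (simp_all add: sets)
  from integrable_bounded[OF P.prob_space_axioms this g bounded] show ?thesis
    by (intro product_integral_insert assms(1,2))
qed

lemma borel_measurable_integral_fun_upd:
  fixes g :: "('i \<Rightarrow> real) \<Rightarrow> real"
  assumes "prob_space \<nu>" "sets \<nu> = sets borel" and g: "g \<in> borel_measurable (PiM (insert i I) (\<lambda>_. borel))"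
  shows "(\<lambda>x. \<integral>y. g (x(i := y)) \<partial>\<nu>) \<in> borel_measurable (PiM I (\<lambda>_. borel))"
proof -
  have "(\<lambda>(x, y). x(i := y)) \<in> measurable (PiM I (\<lambda>_. borel) \<Otimes>\<^sub>M \<nu>) (PiM (insert i I) (\<lambda>_. borel))"
    using measurable_add_dim[of i I "\<lambda>_. borel"]
    by (simp cong: measurable_cong_sets[OF sets_pair_measure_cong[OF refl assms(2)] refl])
  from measurable_compose[OF this g] show ?thesis
    by (intro sigma_finite_measure.borel_measurable_lebesgue_integral prob_space_imp_sigma_finite assms(1))
       (simp add: case_prod_beta')
qed

lemma borel_measurable_fun_upd:
  assumes "i \<notin> I" "x \<in> I \<rightarrow>\<^sub>E UNIV" "g \<in> borel_measurable (PiM (insert i I) (\<lambda>_. borel))"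
  shows "(\<lambda>y. g (x(i := y))) \<in> borel_measurable borel"
proof -
  have "x \<in> space (PiM I (\<lambda>_. borel))"
    using assms(2) by (simp add: space_PiM)
  from measurable_compose[OF measurable_component_update[OF this assms(1)] assms(3)]
  show ?thesis .
qed

lemma antimono_on_PiE_fun_upd:
  fixes g :: "('i \<Rightarrow> 'a::preorder) \<Rightarrow> 'b::order"
  assumes "antimono_on (insert i I \<rightarrow>\<^sub>E UNIV) g"
    and "x \<in> I \<rightarrow>\<^sub>E UNIV" "x' \<in> I \<rightarrow>\<^sub>E UNIV" "x \<le> x'" "y \<le> y'"
  shows "g (x'(i := y')) \<le> g (x(i := y))"
proof (rule monotone_onD[OF assms(1)])
  show "x(i := y) \<in> insert i I \<rightarrow>\<^sub>E UNIV" "x'(i := y') \<in> insert i I \<rightarrow>\<^sub>E UNIV"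
    using assms(2,3) by (auto simp: PiE_iff extensional_def)
  show "x(i := y) \<le> x'(i := y')"
    using assms(4,5) by (auto simp: le_fun_def)
qed

lemma antimono_on_integral_fun_upd:
  fixes g :: "('i \<Rightarrow> real) \<Rightarrow> real"
  assumes "prob_space \<nu>" "sets \<nu> = sets borel" "i \<notin> I"
    and "g \<in> borel_measurable (PiM (insert i I) (\<lambda>_. borel))" "\<And>x. \<bar>g x\<bar> \<le> B"
    and "antimono_on (insert i I \<rightarrow>\<^sub>E UNIV) g"
  shows "antimono_on (I \<rightarrow>\<^sub>E UNIV) (\<lambda>x. \<integral>y. g (x(i := y)) \<partial>\<nu>)"
proof (rule monotone_onI)
  fix x x' :: "'i \<Rightarrow> real"
  assume "x \<in> I \<rightarrow>\<^sub>E UNIV" "x' \<in> I \<rightarrow>\<^sub>E UNIV" "x \<le> x'"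
  then show "(\<integral>y. g (x'(i := y)) \<partial>\<nu>) \<le> (\<integral>y. g (x(i := y)) \<partial>\<nu>)"
    using assms(5)
    by (intro integral_mono integrable_bounded[OF assms(1,2)] borel_measurable_fun_upd[OF assms(3) _ assms(4)]
        antimono_on_PiE_fun_upd[OF assms(6)]) auto
qed

lemma superuniform_integral_fun_upd_le:
  fixes g :: "('i \<Rightarrow> real) \<Rightarrow> real"
  assumes "superuniform \<mu>" "i \<notin> I" "x \<in> I \<rightarrow>\<^sub>E UNIV"
    and "g \<in> borel_measurable (PiM (insert i I) (\<lambda>_. borel))" "\<And>x. \<bar>g x\<bar> \<le> B"
    and "antimono_on (insert i I \<rightarrow>\<^sub>E UNIV) g"
  shows "(\<integral>y. g (x(i := y)) \<partial>\<mu>) \<le> (\<integral>y. g (x(i := y)) \<partial>unif01)"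
  using assms(3,5)
  by (intro superuniform_integral_antimono_le[OF assms(1)] borel_measurable_fun_upd[OF assms(2) _ assms(4)]
      antimonoI antimono_on_PiE_fun_upd[OF assms(6)]) auto

lemma superuniform_integral_PiM_antimono_le:
  fixes g :: "('i \<Rightarrow> real) \<Rightarrow> real"
  assumes "finite I" and \<mu>: "\<And>i. superuniform (\<mu> i)"
    and "g \<in> borel_measurable (PiM I (\<lambda>_. borel))" and "\<And>x. \<bar>g x\<bar> \<le> B"
    and "antimono_on (I \<rightarrow>\<^sub>E UNIV) g"
  shows "(\<integral>x. g x \<partial>PiM I \<mu>) \<le> (\<integral>x. g x \<partial>PiM I (\<lambda>_. unif01))"
  using assms(1,3-)
proof (induction I arbitrary: g rule: finite_induct)
  case empty
  then show ?case by (simp add: PiM_empty)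
next
  case (insert i I g)
  note g = insert.prems
  have prob: "prob_space (\<mu> j)" and sets: "sets (\<mu> j) = sets borel" for j
    using \<mu> by (auto simp: superuniform_def)
  have unif_prob: "prob_space (PiM I (\<lambda>_. unif01))"
    and unif_sets: "sets (PiM I (\<lambda>_. unif01)) = sets (PiM I (\<lambda>_. borel))"
    by (simp_all add: prob_space_PiM prob_space_unif01 cong: sets_PiM_cong)
  define avg where "avg \<nu> x = (\<integral>y. g (x(i := y)) \<partial>\<nu>)" for \<nu> x
  have avg_measurable: "avg \<nu> \<in> borel_measurable (PiM I (\<lambda>_. borel))"
    and avg_bounded: "\<bar>avg \<nu> x\<bar> \<le> B"
    and avg_integrable: "integrable (PiM I (\<lambda>_. unif01)) (avg \<nu>)"
    if "prob_space \<nu>" "sets \<nu> = sets borel" for \<nu> x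
  proof -
    show "avg \<nu> \<in> borel_measurable (PiM I (\<lambda>_. borel))"
      unfolding avg_def using that g(1) by (rule borel_measurable_integral_fun_upd)
    show "\<bar>avg \<nu> x\<bar> \<le> B" for x
      unfolding avg_def using g(2) by (rule prob_space.abs_integral_le_const[OF that(1)])
    then show "integrable (PiM I (\<lambda>_. unif01)) (avg \<nu>)"
      by (intro integrable_bounded[OF unif_prob unif_sets \<open>avg \<nu> \<in> _\<close>])
  qed
  have "(\<integral>x. g x \<partial>PiM (insert i I) \<mu>) = (\<integral>x. avg (\<mu> i) x \<partial>PiM I \<mu>)"
    unfolding avg_def by (rule integral_PiM_insert_bounded[OF insert.hyps prob sets g(1,2)])
  also have "\<dots> \<le> (\<integral>x. avg (\<mu> i) x \<partial>PiM I (\<lambda>_. unif01))"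
  proof (rule insert.IH[OF avg_measurable[OF prob sets] avg_bounded[OF prob sets]])
    show "antimono_on (I \<rightarrow>\<^sub>E UNIV) (avg (\<mu> i))"
      unfolding avg_def by (rule antimono_on_integral_fun_upd[OF prob sets insert.hyps(2) g])
  qed
  also have "\<dots> \<le> (\<integral>x. avg unif01 x \<partial>PiM I (\<lambda>_. unif01))"
  proof (rule integral_mono)
    show "avg (\<mu> i) x \<le> avg unif01 x" if "x \<in> space (PiM I (\<lambda>_. unif01))" for x
      unfolding avg_def using that
      by (intro superuniform_integral_fun_upd_le[OF \<mu> insert.hyps(2) _ g]) (simp add: space_PiM)
  qed (simp_all add: avg_integrable prob sets prob_space_unif01)
  also have "\<dots> = (\<integral>x. g x \<partial>PiM (insert i I) (\<lambda>_. unif01))"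
    unfolding avg_def
    by (rule integral_PiM_insert_bounded[OF insert.hyps prob_space_unif01 _ g(1,2), symmetric]) simp
  finally show ?case .
qed

lemma (in prob_space) distr_indep_vars_eq_PiM:
  assumes "indep_vars M' X I" and "\<And>i. i \<in> I \<Longrightarrow> random_variable (M' i) (X i)"
  shows "distr M (PiM I M') (\<lambda>x. \<lambda>i\<in>I. X i x) = PiM I (\<lambda>i. distr M (M' i) (X i))"
proof (cases "I = {}")
  case True
  have "distr M (count_space {\<lambda>_. undefined}) (\<lambda>_ _. undefined) = count_space {\<lambda>_. undefined}"
  proof (rule measure_eqI)
    fix A assume "A \<in> sets (distr M (count_space {\<lambda>_. undefined}) (\<lambda>_ _. undefined))"
    then have "A = {} \<or> A = {\<lambda>_. undefined}" by auto
    then show "emeasure (distr M (count_space {\<lambda>_. undefined}) (\<lambda>_ _. undefined)) A =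
        emeasure (count_space {\<lambda>_. undefined}) A"
      by (elim disjE) (simp_all add: emeasure_distr emeasure_space_1)
  qed simp
  moreover have "(\<lambda>x. \<lambda>i\<in>{}. X i x) = (\<lambda>_ _. undefined)"
    by (simp add: restrict_def fun_eq_iff)
  ultimately show ?thesis
    using True by (simp only: PiM_empty)
next
  case False
  then show ?thesis
    using indep_vars_iff_distr_eq_PiM'[OF False assms(2)] assms(1) by simp
qed

lemma (in prob_space) integral_indep_vars_eq_PiM:
  fixes F :: "('i \<Rightarrow> 'b) \<Rightarrow> real"
  assumes "indep_vars M' X I" and rv: "\<And>i. i \<in> I \<Longrightarrow> random_variable (M' i) (X i)"
    and "F \<in> borel_measurable (PiM I M')"
  shows "(\<integral>x. F (\<lambda>i\<in>I. X i x) \<partial>M) = (\<integral>y. F y \<partial>PiM I (\<lambda>i. distr M (M' i) (X i)))"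
proof -
  have "(\<lambda>x. \<lambda>i\<in>I. X i x) \<in> measurable M (PiM I M')"
    using rv by (rule measurable_restrict)
  from integral_distr[OF this assms(3)] show ?thesis
    by (simp add: distr_indep_vars_eq_PiM[OF assms(1) rv])
qed

lemma le_PiE_iff:
  fixes p q :: "'i \<Rightarrow> 'a::preorder"
  shows "p \<in> I \<rightarrow>\<^sub>E A \<Longrightarrow> q \<in> I \<rightarrow>\<^sub>E B \<Longrightarrow> p \<le> q \<longleftrightarrow> (\<forall>i\<in>I. p i \<le> q i)"
  by (auto simp: le_fun_def PiE_iff extensional_def)

text \<open>
  The non-null p-values are set to 0, their value under DU; clamping the null ones to [0,1]
  lands in the cube, where t is measurable and antitone.
\<close>

definition null_fill :: "nat \<Rightarrow> nat \<Rightarrow> (nat \<Rightarrow> real) \<Rightarrow> nat \<Rightarrow> real" where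
  "null_fill m m0 p = (\<lambda>i\<in>{..<m}. if i < m0 then max 0 (min 1 (p i)) else 0)"

lemma null_fill_in_cube: "null_fill m m0 p \<in> {..<m} \<rightarrow>\<^sub>E {0..1}"
  by (auto simp: null_fill_def)

lemma null_fill_restrict: "null_fill m m0 (restrict p {..<m0}) = null_fill m m0 p"
  by (simp add: null_fill_def fun_eq_iff)

lemma mono_null_fill: "mono (null_fill m m0)"
proof (rule monoI)
  fix p q :: "nat \<Rightarrow> real"
  assume "p \<le> q"
  show "null_fill m m0 p \<le> null_fill m m0 q"
  proof (rule le_funI)
    fix i
    have "p i \<le> q i"
      using \<open>p \<le> q\<close> by (rule le_funD)
    then show "null_fill m m0 p i \<le> null_fill m m0 q i"
      by (auto simp: null_fill_def max_def min_def)
  qed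
qed

lemma null_fill_le: "p \<in> {..<m} \<rightarrow>\<^sub>E {0..1} \<Longrightarrow> null_fill m m0 p \<le> p"
  by (auto simp: null_fill_def le_fun_def PiE_iff extensional_def)

lemma null_fill_eq:
  assumes "p \<in> {..<m} \<rightarrow>\<^sub>E UNIV" and "\<And>i. i < m \<Longrightarrow> p i \<in> (if i < m0 then {0..1} else {0})"
  shows "null_fill m m0 p = p"
  using assms by (fastforce simp: null_fill_def fun_eq_iff PiE_iff extensional_def split: if_splits)

lemma measurable_component_lessThan:
  "i < n \<Longrightarrow> (\<lambda>p. p i) \<in> borel_measurable (PiM {..<n} (\<lambda>_. borel))"
  by (intro measurable_component_singleton) auto

lemma measurable_null_fill:
  "null_fill m m0 \<in> measurable (PiM {..<m0} (\<lambda>_. borel)) (restrict_space (pspace m) ({..<m} \<rightarrow>\<^sub>E {0..1}))"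
proof (rule measurable_restrict_space2)
  show "null_fill m m0 \<in> space (PiM {..<m0} (\<lambda>_. borel)) \<rightarrow> {..<m} \<rightarrow>\<^sub>E {0..1}"
    using null_fill_in_cube by blast
  show "null_fill m m0 \<in> measurable (PiM {..<m0} (\<lambda>_. borel)) (pspace m)"
    unfolding null_fill_def pspace_def
  proof (rule measurable_restrict)
    fix i
    show "(\<lambda>p::nat \<Rightarrow> real. if i < m0 then max 0 (min 1 (p i)) else 0)
        \<in> borel_measurable (PiM {..<m0} (\<lambda>_. borel))"
    proof (cases "i < m0")
      case True
      have "(\<lambda>x::real. max 0 (min 1 x)) \<in> borel_measurable borel"
        by (intro borel_measurable_continuous_onI continuous_intros)
      from measurable_compose[OF measurable_component_lessThan[OF True] this]
      show ?thesis using True by (simp only: if_True)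
    qed simp
  qed
qed

lemma Vrej_le: "Vrej m0 t p \<le> m0"
  unfolding Vrej_def using card_mono[of "{..<m0}" "{i. i < m0 \<and> p i \<le> t p}"] by auto

lemma abs_Vrej_le_sum:
  fixes \<phi> :: "nat \<Rightarrow> real"
  shows "\<bar>\<phi> (Vrej m0 t p)\<bar> \<le> (\<Sum>k\<le>m0. \<bar>\<phi> k\<bar>)"
  using Vrej_le[of m0 t p] by (intro member_le_sum) auto

lemma antimono_on_Vrej:
  assumes "antimono_on A t"
  shows "antimono_on A (Vrej m0 t)"
proof (rule monotone_onI)
  fix p q assume "p \<in> A" "q \<in> A" "p \<le> q"
  then have "t q \<le> t p"
    by (rule monotone_onD[OF assms])
  with \<open>p \<le> q\<close> have "{i. i < m0 \<and> q i \<le> t q} \<subseteq> {i. i < m0 \<and> p i \<le> t p}"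
    by (auto simp: le_fun_def intro: order_trans)
  then show "Vrej m0 t q \<le> Vrej m0 t p"
    unfolding Vrej_def by (intro card_mono) auto
qed

lemma antimono_Vrej_null_fill:
  fixes \<phi> :: "nat \<Rightarrow> real"
  assumes "antimono_on ({..<m} \<rightarrow>\<^sub>E {0..1}) t" and "mono \<phi>"
  shows "antimono (\<lambda>q. \<phi> (Vrej m0 t (null_fill m m0 q)))"
proof (rule antimonoI)
  fix p q :: "nat \<Rightarrow> real" assume "p \<le> q"
  then have "Vrej m0 t (null_fill m m0 q) \<le> Vrej m0 t (null_fill m m0 p)"
    by (intro monotone_onD[OF antimono_on_Vrej[OF assms(1)]] null_fill_in_cube monoD[OF mono_null_fill])
  then show "\<phi> (Vrej m0 t (null_fill m m0 q)) \<le> \<phi> (Vrej m0 t (null_fill m m0 p))"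
    by (rule monoD[OF assms(2)])
qed

lemma measurable_Vrej_null_fill:
  assumes "t \<in> borel_measurable (restrict_space (pspace m) ({..<m} \<rightarrow>\<^sub>E {0..1}))"
  shows "(\<lambda>q. Vrej m0 t (null_fill m m0 q)) \<in> measurable (PiM {..<m0} (\<lambda>_. borel)) (count_space UNIV)"
  unfolding Vrej_def
proof (rule measurable_card)
  have [measurable]: "(\<lambda>q. t (null_fill m m0 q)) \<in> borel_measurable (PiM {..<m0} (\<lambda>_. borel))"
    using measurable_compose[OF measurable_null_fill assms] .
  fix j
  show "{q \<in> space (PiM {..<m0} (\<lambda>_. borel)). j \<in> {i. i < m0 \<and> null_fill m m0 q i \<le> t (null_fill m m0 q)}}
      \<in> sets (PiM {..<m0} (\<lambda>_. borel))"
  proof (cases "j < m0")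
    case True
    then have [measurable]: "(\<lambda>q. null_fill m m0 q j) \<in> borel_measurable (PiM {..<m0} (\<lambda>_. borel))"
      using measurable_component_lessThan[of j m0] by (cases "j < m") (simp_all add: null_fill_def)
    show ?thesis using True by simp
  qed simp
qed

lemma borel_measurable_Vrej_null_fill:
  fixes \<phi> :: "nat \<Rightarrow> real"
  assumes "t \<in> borel_measurable (restrict_space (pspace m) ({..<m} \<rightarrow>\<^sub>E {0..1}))"
  shows "(\<lambda>q. \<phi> (Vrej m0 t (null_fill m m0 q))) \<in> borel_measurable (PiM {..<m0} (\<lambda>_. borel))"
  using measurable_Vrej_null_fill[OF assms] by (rule measurable_compose) simp

lemma borel_measurable_Vrej_null_fill_pspace:
  fixes \<phi> :: "nat \<Rightarrow> real"
  assumes "m0 \<le> m" "t \<in> borel_measurable (restrict_space (pspace m) ({..<m} \<rightarrow>\<^sub>E {0..1}))"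
  shows "(\<lambda>p. \<phi> (Vrej m0 t (null_fill m m0 p))) \<in> borel_measurable (pspace m)"
proof -
  have "(\<lambda>p. restrict p {..<m0}) \<in> measurable (pspace m) (PiM {..<m0} (\<lambda>_. borel))"
    unfolding pspace_def using assms(1) by (intro measurable_restrict_subset) auto
  from measurable_compose[OF this borel_measurable_Vrej_null_fill[OF assms(2)]]
  show ?thesis by (simp add: null_fill_restrict)
qed

lemma risk_le_integral_null_fill:
  fixes \<phi> :: "nat \<Rightarrow> real"
  assumes "prob_space M" and sets_M: "sets M = sets (pspace m)"
    and in_cube: "AE p in M. \<forall>i<m. p i \<in> {0..1}"
    and "m0 \<le> m"
    and t_measurable: "t \<in> borel_measurable (restrict_space (pspace m) ({..<m} \<rightarrow>\<^sub>E {0..1}))"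
    and t_antimono: "antimono_on ({..<m} \<rightarrow>\<^sub>E {0..1}) t"
    and "mono \<phi>"
    and risk_measurable: "(\<lambda>p. \<phi> (Vrej m0 t p)) \<in> borel_measurable (pspace m)"
  shows "risk M m0 t \<phi> \<le> (\<integral>p. \<phi> (Vrej m0 t (null_fill m m0 p)) \<partial>M)"
  unfolding risk_def
proof (rule integral_mono_AE)
  show "integrable M (\<lambda>p. \<phi> (Vrej m0 t p))"
    using abs_Vrej_le_sum by (intro integrable_bounded[OF assms(1) sets_M risk_measurable])
  show "integrable M (\<lambda>p. \<phi> (Vrej m0 t (null_fill m m0 p)))"
    using abs_Vrej_le_sum
    by (intro integrable_bounded[OF assms(1) sets_M borel_measurable_Vrej_null_fill_pspace[OF \<open>m0 \<le> m\<close> t_measurable]])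
  have space_M: "space M = {..<m} \<rightarrow>\<^sub>E UNIV"
    using sets_eq_imp_space_eq[OF sets_M] by (simp add: pspace_def space_PiM)
  show "AE p in M. \<phi> (Vrej m0 t p) \<le> \<phi> (Vrej m0 t (null_fill m m0 p))"
    using AE_space in_cube
  proof eventually_elim
    case (elim p)
    then have p: "p \<in> {..<m} \<rightarrow>\<^sub>E {0..1}"
      by (auto simp: space_M PiE_iff)
    have "Vrej m0 t p \<le> Vrej m0 t (null_fill m m0 p)"
      by (intro monotone_onD[OF antimono_on_Vrej[OF t_antimono]] null_fill_in_cube p null_fill_le)
    then show ?case by (rule monoD[OF \<open>mono \<phi>\<close>])
  qed
qed

lemma integral_null_fill_PiM_le_unif01:
  fixes \<phi> :: "nat \<Rightarrow> real"
  assumes \<mu>: "\<And>i. i < m0 \<Longrightarrow> superuniform (\<mu> i)"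
    and t_measurable: "t \<in> borel_measurable (restrict_space (pspace m) ({..<m} \<rightarrow>\<^sub>E {0..1}))"
    and t_antimono: "antimono_on ({..<m} \<rightarrow>\<^sub>E {0..1}) t"
    and "mono \<phi>"
  shows "(\<integral>q. \<phi> (Vrej m0 t (null_fill m m0 q)) \<partial>PiM {..<m0} \<mu>) \<le>
    (\<integral>q. \<phi> (Vrej m0 t (null_fill m m0 q)) \<partial>PiM {..<m0} (\<lambda>_. unif01))"
proof -
  define \<mu>' where "\<mu>' i = (if i < m0 then \<mu> i else unif01)" for i
  have "PiM {..<m0} \<mu> = PiM {..<m0} \<mu>'"
    by (intro PiM_cong) (auto simp: \<mu>'_def)
  also have "(\<integral>q. \<phi> (Vrej m0 t (null_fill m m0 q)) \<partial>PiM {..<m0} \<mu>') \<le>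
      (\<integral>q. \<phi> (Vrej m0 t (null_fill m m0 q)) \<partial>PiM {..<m0} (\<lambda>_. unif01))"
  proof (rule superuniform_integral_PiM_antimono_le[where B="\<Sum>k\<le>m0. \<bar>\<phi> k\<bar>"])
    show "superuniform (\<mu>' i)" for i
      using \<mu> superuniform_unif01 by (simp add: \<mu>'_def)
    show "antimono_on ({..<m0} \<rightarrow>\<^sub>E UNIV) (\<lambda>q. \<phi> (Vrej m0 t (null_fill m m0 q)))"
      using antimono_Vrej_null_fill[OF t_antimono \<open>mono \<phi>\<close>] by (rule monotone_on_subset) simp
  qed (simp_all add: borel_measurable_Vrej_null_fill[OF t_measurable] abs_Vrej_le_sum)
  finally show ?thesis .
qed

lemma sets_DU: "sets (DU m m0) = sets (pspace m)"
  unfolding DU_def pspace_def by (rule sets_PiM_cong) auto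

lemma AE_DU_null_fill: "AE p in DU m m0. null_fill m m0 p = p"
proof -
  define D where "D i = (if i < m0 then unif01 else return borel (0::real))" for i
  have prob: "prob_space (D i)" for i
    by (simp add: D_def prob_space_unif01 prob_space_return)
  have "AE p in PiM {..<m} D. \<forall>i\<in>{..<m}. p i \<in> (if i < m0 then {0..1} else {0})"
  proof (rule AE_finite_allI)
    fix i assume "i \<in> {..<m}"
    moreover have "AE x in D i. x \<in> (if i < m0 then {0..1} else {0})"
    proof (cases "i < m0")
      case True
      have "AE x in unif01. x \<in> {0..1}"
        by (rule AE_uniform_measureI) auto
      then show ?thesis using True unfolding D_def by simp
    qed (unfold D_def, simp add: AE_return)
    ultimately show "AE p in PiM {..<m} D. p i \<in> (if i < m0 then {0..1} else {0})"
      by (rule AE_PiM_component[OF prob])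
  qed simp
  then show ?thesis
    unfolding DU_def D_def[symmetric] using AE_space
  proof eventually_elim
    case (elim p)
    then show ?case
      by (intro null_fill_eq) (auto simp: space_PiM)
  qed
qed

lemma integral_PiM_unif01_eq_risk_DU:
  fixes \<phi> :: "nat \<Rightarrow> real"
  assumes "m0 \<le> m"
    and t_measurable: "t \<in> borel_measurable (restrict_space (pspace m) ({..<m} \<rightarrow>\<^sub>E {0..1}))"
    and risk_measurable: "(\<lambda>p. \<phi> (Vrej m0 t p)) \<in> borel_measurable (pspace m)"
  shows "(\<integral>q. \<phi> (Vrej m0 t (null_fill m m0 q)) \<partial>PiM {..<m0} (\<lambda>_. unif01)) = risk (DU m m0) m0 t \<phi>"
proof -
  define D where "D i = (if i < m0 then unif01 else return borel (0::real))" for i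
  interpret product_prob_space D "{..<m}"
    by (simp add: D_def prob_space_unif01 prob_space_return product_prob_space.intro
        product_prob_space_axioms.intro product_sigma_finite.intro prob_space_imp_sigma_finite)
  have "PiM {..<m0} (\<lambda>_. unif01) = PiM {..<m0} D"
    by (intro PiM_cong) (auto simp: D_def)
  also have "\<dots> = distr (DU m m0) (PiM {..<m0} D) (\<lambda>p. restrict p {..<m0})"
    unfolding DU_def D_def[symmetric] using assms(1) by (intro distr_restrict) auto
  finally have marginal: "PiM {..<m0} (\<lambda>_. unif01) = distr (DU m m0) (PiM {..<m0} D) (\<lambda>p. restrict p {..<m0})" .
  have "(\<lambda>p. restrict p {..<m0}) \<in> measurable (DU m m0) (PiM {..<m0} D)"
    unfolding DU_def D_def[symmetric] using assms(1) by (intro measurable_restrict_subset) auto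
  moreover have "(\<lambda>q. \<phi> (Vrej m0 t (null_fill m m0 q))) \<in> borel_measurable (PiM {..<m0} D)"
  proof -
    have sets_D: "sets (PiM {..<m0} D) = sets (PiM {..<m0} (\<lambda>_. borel))"
      by (rule sets_PiM_cong) (simp_all add: D_def)
    show ?thesis
      unfolding measurable_cong_sets[OF sets_D refl] by (rule borel_measurable_Vrej_null_fill[OF t_measurable])
  qed
  ultimately have "(\<integral>q. \<phi> (Vrej m0 t (null_fill m m0 q)) \<partial>PiM {..<m0} (\<lambda>_. unif01)) =
      (\<integral>p. \<phi> (Vrej m0 t (null_fill m m0 p)) \<partial>DU m m0)"
    unfolding marginal by (simp add: integral_distr null_fill_restrict)
  also have "\<dots> = risk (DU m m0) m0 t \<phi>"
    unfolding risk_def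
  proof (rule integral_cong_AE)
    show "(\<lambda>p. \<phi> (Vrej m0 t (null_fill m m0 p))) \<in> borel_measurable (DU m m0)"
      using borel_measurable_Vrej_null_fill_pspace[OF assms(1,2)]
      by (simp add: measurable_cong_sets[OF sets_DU refl])
    show "(\<lambda>p. \<phi> (Vrej m0 t p)) \<in> borel_measurable (DU m m0)"
      using risk_measurable by (simp add: measurable_cong_sets[OF sets_DU refl])
    show "AE p in DU m m0. \<phi> (Vrej m0 t (null_fill m m0 p)) = \<phi> (Vrej m0 t p)"
      using AE_DU_null_fill by eventually_elim simp
  qed
  finally show ?thesis .
qed

theorem lemmaC1:
  fixes m m0 :: nat
    and P :: "(nat \<Rightarrow> real) measure"
    and t :: "(nat \<Rightarrow> real) \<Rightarrow> real"
    and \<phi> :: "nat \<Rightarrow> real"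
  assumes "m \<ge> 1" and "m0 \<le> m"
    and "prob_space P" and "sets P = sets (pspace m)"
    and "AE p in P. \<forall>i<m. p i \<in> {0..1}"
    and "prob_space.indep_vars P (\<lambda>_. borel) (\<lambda>i p. p i) {..<m0}"
    and "\<And>i x. i < m0 \<Longrightarrow> x \<in> {0..1} \<Longrightarrow> measure P {p \<in> space P. p i \<le> x} \<le> x"
    and "t \<in> borel_measurable (restrict_space (pspace m) ({..<m} \<rightarrow>\<^sub>E {0..1}))"
    and "\<And>p. p \<in> {..<m} \<rightarrow>\<^sub>E {0..1} \<Longrightarrow> t p \<in> {0..1}"
    and "\<And>p q. p \<in> {..<m} \<rightarrow>\<^sub>E {0..1} \<Longrightarrow> q \<in> {..<m} \<rightarrow>\<^sub>E {0..1} \<Longrightarrow>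
               (\<forall>i<m. p i \<le> q i) \<Longrightarrow> t q \<le> t p"
    and "mono \<phi>"
  shows "risk P m0 t \<phi> \<le> risk (DU m m0) m0 t \<phi>"
proof (cases "(\<lambda>p. \<phi> (Vrej m0 t p)) \<in> borel_measurable (pspace m)")
  case False
  \<comment> \<open>then both risks are Bochner integrals of a non-integrable function, hence 0\<close>
  have "\<not> integrable M (\<lambda>p. \<phi> (Vrej m0 t p))" if "sets M = sets (pspace m)" for M
    using False borel_measurable_integrable measurable_cong_sets[OF that refl] by blast
  then show ?thesis
    using assms(4) sets_DU by (simp add: risk_def not_integrable_integral_eq)
next
  case True
  interpret P: prob_space P by fact
  have t_antimono: "antimono_on ({..<m} \<rightarrow>\<^sub>E {0..1}) t"
    using assms(10) by (intro monotone_onI) (simp add: le_PiE_iff)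
  have coordinate: "(\<lambda>p. p i) \<in> borel_measurable P" if "i < m0" for i
    unfolding measurable_cong_sets[OF assms(4) refl] pspace_def
    using that assms(2) by (intro measurable_component_singleton) auto
  have "risk P m0 t \<phi> \<le> (\<integral>p. \<phi> (Vrej m0 t (null_fill m m0 p)) \<partial>P)"
    by (rule risk_le_integral_null_fill[OF assms(3-5,2,8) t_antimono assms(11) True])
  also have "\<dots> = (\<integral>q. \<phi> (Vrej m0 t (null_fill m m0 q)) \<partial>PiM {..<m0} (\<lambda>i. distr P borel (\<lambda>p. p i)))"
    using P.integral_indep_vars_eq_PiM[OF assms(6) coordinate[folded lessThan_iff]
        borel_measurable_Vrej_null_fill[OF assms(8)]]
    by (simp add: null_fill_restrict)
  also have "\<dots> \<le> (\<integral>q. \<phi> (Vrej m0 t (null_fill m m0 q)) \<partial>PiM {..<m0} (\<lambda>_. unif01))"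
    using P.superuniform_distr[OF coordinate assms(7)]
    by (intro integral_null_fill_PiM_le_unif01[OF _ assms(8) t_antimono assms(11)]) simp
  also have "\<dots> = risk (DU m m0) m0 t \<phi>"
    by (rule integral_PiM_unif01_eq_risk_DU[OF assms(2,8) True])
  finally show ?thesis .
qed

end
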